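(* For every CF program $\mathtt{p}$ there is a polynomial $\pi$ such that $\#\mathit{Reach}_{\mathtt{p}}(x) \le \pi(|x|)$ for all $x \in \{0,1\}^*$.
   Context: CF ("cons-free") is a first-order, call-by-value functional language over booleans and bit lists $\{0,1\}^*$. A program is a finite sequence of mutually recursive function definitions $\mathtt{f\ x1 \dots xm = e}$ ($m\ge0$), the first being a one-argument entry function. Expressions are $\mathtt{True}$, $\mathtt{False}$, $\mathtt{[]}$, variables, base calls $\mathtt{not}$, $\mathtt{null}$, $\mathtt{head}$, $\mathtt{tail}$, conditionals $\mathtt{if\ e_0\ then\ e_1\ else\ e_2}$, and calls $\mathtt{f\ e_1\dots e_m}$ of defined functions; there are no list constructors. Semantics is standard big-step call-by-value evaluation: a call evaluates its arguments to values $w_i$ and then evaluates the body of $\mathtt{f}$ in the environment $\rho=[\mathtt{x1}\mapsto w_1,\dots,\mathtt{xm}\mapsto w_m]$; the program on input $x$ starts by evaluating the entry body in $[\mathtt{x}\mapsto x]$. $\mathit{Reach}_{\mathtt{p}}(x)$ is the set of pairs $(\mathtt{f},\rho)$ such that the body of the defined function $\mathtt{f}$ is called at least once with environment $\rho$ during the computation of $\mathtt{p}$ on input $x$; $\#$ denotes cardinality. *)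

theory Defs
  imports "HOL-Computational_Algebra.Polynomial"
begin

(* Values of CF: booleans and bit lists (bit 1 = True, bit 0 = False). *)
datatype val = B bool | L "bool list"

(* Expressions. Variables are referred to by their parameter position (x1 = Var 0, ...);
   defined functions by their index in the program. *)
datatype expr =
    ETrue | EFalse | ENil
  | Var nat
  | Not expr | Null expr | Head expr | Tail expr
  | If expr expr expr
  | Call nat "expr list"

(* A program: list of definitions (arity m, body); the first is the entry function. *)
type_synonym prog = "(nat \<times> expr) list"

fun wf_expr :: "prog \<Rightarrow> nat \<Rightarrow> expr \<Rightarrow> bool" where
  "wf_expr p m ETrue = True"
| "wf_expr p m EFalse = True"
| "wf_expr p m ENil = True"
| "wf_expr p m (Var i) = (i < m)"
| "wf_expr p m (Not e) = wf_expr p m e"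
| "wf_expr p m (Null e) = wf_expr p m e"
| "wf_expr p m (Head e) = wf_expr p m e"
| "wf_expr p m (Tail e) = wf_expr p m e"
| "wf_expr p m (If e0 e1 e2) = (wf_expr p m e0 \<and> wf_expr p m e1 \<and> wf_expr p m e2)"
| "wf_expr p m (Call g es) =
     (g < length p \<and> length es = fst (p ! g) \<and> (\<forall>e \<in> set es. wf_expr p m e))"

definition wf_prog :: "prog \<Rightarrow> bool" where
  "wf_prog p \<longleftrightarrow> p \<noteq> [] \<and> fst (p ! 0) = 1 \<and> (\<forall>(m, e) \<in> set p. wf_expr p m e)"

inductive eval :: "prog \<Rightarrow> val list \<Rightarrow> expr \<Rightarrow> val \<Rightarrow> bool"
  and evals :: "prog \<Rightarrow> val list \<Rightarrow> expr list \<Rightarrow> val list \<Rightarrow> bool"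
  for p :: prog where
  ev_true: "eval p r ETrue (B True)"
| ev_false: "eval p r EFalse (B False)"
| ev_nil: "eval p r ENil (L [])"
| ev_var: "i < length r \<Longrightarrow> eval p r (Var i) (r ! i)"
| ev_not: "eval p r e (B b) \<Longrightarrow> eval p r (Not e) (B (\<not> b))"
| ev_null: "eval p r e (L xs) \<Longrightarrow> eval p r (Null e) (B (xs = []))"
| ev_head: "eval p r e (L (a # xs)) \<Longrightarrow> eval p r (Head e) (B a)"
| ev_tail: "eval p r e (L (a # xs)) \<Longrightarrow> eval p r (Tail e) (L xs)"
| ev_if_t: "eval p r e0 (B True) \<Longrightarrow> eval p r e1 v \<Longrightarrow> eval p r (If e0 e1 e2) v"
| ev_if_f: "eval p r e0 (B False) \<Longrightarrow> eval p r e2 v \<Longrightarrow> eval p r (If e0 e1 e2) v"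
| ev_call: "evals p r es ws \<Longrightarrow> f < length p \<Longrightarrow> fst (p ! f) = length ws \<Longrightarrow>
             eval p ws (snd (p ! f)) v \<Longrightarrow> eval p r (Call f es) v"
| evs_nil: "evals p r [] []"
| evs_cons: "eval p r e v \<Longrightarrow> evals p r es vs \<Longrightarrow> evals p r (e # es) (v # vs)"

(* calls p r e (g, ws): while evaluating e in environment r, the body of g is
   (directly) called with environment ws. *)
inductive calls :: "prog \<Rightarrow> val list \<Rightarrow> expr \<Rightarrow> nat \<times> val list \<Rightarrow> bool"
  and callss :: "prog \<Rightarrow> val list \<Rightarrow> expr list \<Rightarrow> nat \<times> val list \<Rightarrow> bool"
  for p :: prog where
  c_not: "calls p r e c \<Longrightarrow> calls p r (Not e) c"
| c_null: "calls p r e c \<Longrightarrow> calls p r (Null e) c"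
| c_head: "calls p r e c \<Longrightarrow> calls p r (Head e) c"
| c_tail: "calls p r e c \<Longrightarrow> calls p r (Tail e) c"
| c_if0: "calls p r e0 c \<Longrightarrow> calls p r (If e0 e1 e2) c"
| c_if1: "eval p r e0 (B True) \<Longrightarrow> calls p r e1 c \<Longrightarrow> calls p r (If e0 e1 e2) c"
| c_if2: "eval p r e0 (B False) \<Longrightarrow> calls p r e2 c \<Longrightarrow> calls p r (If e0 e1 e2) c"
| c_args: "callss p r es c \<Longrightarrow> calls p r (Call f es) c"
| c_call: "evals p r es ws \<Longrightarrow> f < length p \<Longrightarrow> fst (p ! f) = length ws \<Longrightarrow>
             calls p r (Call f es) (f, ws)"
| cs_hd: "calls p r e c \<Longrightarrow> callss p r (e # es) c"
| cs_tl: "eval p r e v \<Longrightarrow> callss p r es c \<Longrightarrow> callss p r (e # es) c"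

inductive_set Reach :: "prog \<Rightarrow> bool list \<Rightarrow> (nat \<times> val list) set"
  for p :: prog and x :: "bool list" where
  reach_entry: "(0, [L x]) \<in> Reach p x"
| reach_step: "(f, r) \<in> Reach p x \<Longrightarrow> f < length p \<Longrightarrow> calls p r (snd (p ! f)) c \<Longrightarrow>
               c \<in> Reach p x"

end

theory Submission
  imports Defs "HOL-Library.Sublist"
begin

text \<open>Without list constructors, every value arising in a computation on input \<open>x\<close> is a
  boolean or a suffix of \<open>x\<close>: at most \<open>|x| + 3\<close> values. A reachable pair is a function
  index together with an environment of these values whose length is the arity of the
  function, so there are at most \<open>length p * (|x| + 3) ^ a\<close> of them, with \<open>a\<close> the maximal
  arity in \<open>p\<close>.\<close>

definition tail_closed :: "val set \<Rightarrow> bool" where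
  "tail_closed V \<longleftrightarrow> range B \<subseteq> V \<and> L [] \<in> V \<and> (\<forall>a xs. L (a # xs) \<in> V \<longrightarrow> L xs \<in> V)"

lemma eval_in_tail_closed:
  assumes "tail_closed V"
  shows "eval p r e v \<Longrightarrow> set r \<subseteq> V \<Longrightarrow> v \<in> V"
    and "evals p r es vs \<Longrightarrow> set r \<subseteq> V \<Longrightarrow> set vs \<subseteq> V"
  by (induction rule: eval_evals.inducts) (use assms in \<open>auto simp: tail_closed_def\<close>)

definition call_space :: "prog \<Rightarrow> val set \<Rightarrow> (nat \<times> val list) set" where
  "call_space p V = (SIGMA f:{..<length p}. {ws. set ws \<subseteq> V \<and> length ws = fst (p ! f)})"

lemma calls_in_call_space:
  assumes "tail_closed V"
  shows "calls p r e c \<Longrightarrow> set r \<subseteq> V \<Longrightarrow> c \<in> call_space p V"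
    and "callss p r es c \<Longrightarrow> set r \<subseteq> V \<Longrightarrow> c \<in> call_space p V"
  by (induction rule: calls_callss.inducts)
     (auto simp: call_space_def dest: eval_in_tail_closed(2)[OF assms])

definition input_values :: "bool list \<Rightarrow> val set" where
  "input_values x = range B \<union> L ` set (suffixes x)"

lemma tail_closed_input_values: "tail_closed (input_values x)"
  unfolding tail_closed_def input_values_def by (fastforce dest: suffix_ConsD)

lemma finite_input_values: "finite (input_values x)"
  by (simp add: input_values_def)

lemma card_input_values_le: "card (input_values x) \<le> length x + 3"
proof -
  have "range B = {B True, B False}"
    by (auto intro: bool.exhaust)
  then have "card (range B) \<le> 2"
    by (simp add: card_insert_if)
  moreover have "card (L ` set (suffixes x)) \<le> length x + 1"
    using card_image_le[of "set (suffixes x)" L] by simp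
  ultimately show ?thesis
    using card_Un_le[of "range B" "L ` set (suffixes x)"] by (simp add: input_values_def)
qed

lemma Reach_subset_call_space:
  assumes "wf_prog p"
  shows "Reach p x \<subseteq> call_space p (input_values x)"
proof
  fix c assume "c \<in> Reach p x"
  then show "c \<in> call_space p (input_values x)"
  proof (induction rule: Reach.induct)
    case reach_entry
    have "L x \<in> input_values x"
      by (simp add: input_values_def)
    with assms show ?case
      by (auto simp: call_space_def wf_prog_def)
  next
    case (reach_step f r c)
    then have "set r \<subseteq> input_values x"
      by (simp add: call_space_def)
    with reach_step.hyps(3) show ?case
      by (rule calls_in_call_space(1)[OF tail_closed_input_values])
  qed
qed

lemma finite_call_space: "finite V \<Longrightarrow> finite (call_space p V)"
  unfolding call_space_def by (auto intro: finite_lists_length_eq)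

definition max_arity :: "prog \<Rightarrow> nat" where
  "max_arity p = Max (fst ` set p)"

lemma card_call_space_le:
  assumes "finite V" and "card V \<le> n" and "0 < n"
  shows "card (call_space p V) \<le> length p * n ^ max_arity p"
proof -
  have "card (call_space p V) = (\<Sum>f<length p. card V ^ fst (p ! f))"
    unfolding call_space_def using assms(1)
    by (simp add: card_SigmaI finite_lists_length_eq card_lists_length_eq)
  also have "\<dots> \<le> (\<Sum>f<length p. n ^ max_arity p)"
  proof (rule sum_mono)
    fix f assume "f \<in> {..<length p}"
    then have "fst (p ! f) \<le> max_arity p"
      unfolding max_arity_def by (intro Max_ge) auto
    then have "n ^ fst (p ! f) \<le> n ^ max_arity p"
      using assms(3) by (intro power_increasing) auto
    with assms(2) show "card V ^ fst (p ! f) \<le> n ^ max_arity p"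
      by (meson order_trans power_mono zero_le)
  qed
  finally show ?thesis
    by simp
qed

theorem lemma3:
  fixes p :: prog
  assumes "wf_prog p"
  shows "\<exists>\<pi> :: real poly. \<forall>x :: bool list.
           finite (Reach p x) \<and> real (card (Reach p x)) \<le> poly \<pi> (real (length x))"
proof (intro exI allI conjI)
  let ?\<pi> = "smult (real (length p)) ([:3, 1:] ^ max_arity p)"
  fix x
  have sub: "Reach p x \<subseteq> call_space p (input_values x)"
    using assms by (rule Reach_subset_call_space)
  have fin: "finite (call_space p (input_values x))"
    by (simp add: finite_call_space finite_input_values)
  from sub fin show "finite (Reach p x)"
    by (rule finite_subset)
  have "card (Reach p x) \<le> card (call_space p (input_values x))"
    using fin sub by (rule card_mono)
  also have "\<dots> \<le> length p * (length x + 3) ^ max_arity p"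
    by (rule card_call_space_le[OF finite_input_values card_input_values_le]) simp
  finally have "card (Reach p x) \<le> length p * (length x + 3) ^ max_arity p" .
  then have "real (card (Reach p x)) \<le> real (length p * (length x + 3) ^ max_arity p)"
    by (simp only: of_nat_le_iff)
  also have "\<dots> = poly ?\<pi> (real (length x))"
    by (simp add: algebra_simps)
  finally show "real (card (Reach p x)) \<le> poly ?\<pi> (real (length x))" .
qed

end
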